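(* Let $(V,\|\cdot\|)$ be a Banach space. Then $V$ admits exactly one conical bicombing, namely the one given by linear segments, $\sigma(x,y,t)=(1-t)x+ty$.
   Context: A bicombing on a metric space $(X,d)$ is a map $\sigma\colon X\times X\times[0,1]\to X$ such that each $\sigma_{xy}:=\sigma(x,y,\cdot)$ is a geodesic from $x$ to $y$ ($\sigma_{xy}(0)=x$, $\sigma_{xy}(1)=y$, $d(\sigma_{xy}(s),\sigma_{xy}(t))=|s-t|d(x,y)$). It is conical if $d(\sigma_{xy}(t),\sigma_{x'y'}(t))\le(1-t)d(x,x')+t\,d(y,y')$ for all $x,y,x',y'\in X$ and $t\in[0,1]$. The Banach space carries the metric $d(x,y)=\|x-y\|$. *)

theory Defs
  imports "HOL-Analysis.Analysis"
begin

text \<open>Only the values for t in [0,1]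
are relevant; values outside [0,1] are unconstrained.\<close>

definition bicombing :: "('a::metric_space \<Rightarrow> 'a \<Rightarrow> real \<Rightarrow> 'a) \<Rightarrow> bool" where
  "bicombing \<sigma> \<longleftrightarrow>
     (\<forall>x y. \<sigma> x y 0 = x \<and> \<sigma> x y 1 = y \<and>
        (\<forall>s\<in>{0..1}. \<forall>t\<in>{0..1}. dist (\<sigma> x y s) (\<sigma> x y t) = \<bar>s - t\<bar> * dist x y))"

definition conical_bicombing :: "('a::metric_space \<Rightarrow> 'a \<Rightarrow> real \<Rightarrow> 'a) \<Rightarrow> bool" where
  "conical_bicombing \<sigma> \<longleftrightarrow> bicombing \<sigma> \<and>
     (\<forall>x y x' y'. \<forall>t\<in>{0..1}.
        dist (\<sigma> x y t) (\<sigma> x' y' t) \<le> (1 - t) * dist x x' + t * dist y y')"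

end

theory Submission
  imports Defs
begin

text \<open>Comparing \<open>\<sigma> x y t\<close> with the constant geodesic \<open>\<sigma> c c t = c\<close> shows that
\<open>p = \<sigma> x y t\<close> satisfies \<open>\<parallel>p - c\<parallel> \<le> (1 - t) \<parallel>x - c\<parallel> + t \<parallel>y - c\<parallel>\<close> for every \<open>c\<close>, and in a
normed space this forces \<open>p = l\<close> with \<open>l = (1 - t) x + t y\<close>. Otherwise write \<open>p - l = \<epsilon> v\<close>
with \<open>\<parallel>v\<parallel> = 1\<close>, \<open>\<epsilon> > 0\<close>, put \<open>u = y - x\<close> and test with \<open>c = l - R v - k u\<close> for a large \<open>R\<close>.
The function \<open>f s = \<parallel>R v + s u\<parallel>\<close> is convex, and since \<open>p - c = (R + \<epsilon>) v + k u\<close> lies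
further out in direction \<open>v\<close> than \<open>R v + k u\<close>, the test says that the convexity gap of \<open>f\<close>
at \<open>k = (1 - t) (k - t) + t (k + 1 - t)\<close> is at least \<open>\<epsilon>/2\<close>. So the unit difference quotients
of \<open>f\<close> grow by \<open>2 \<epsilon>\<close> every two steps, although they are bounded by \<open>\<parallel>u\<parallel>\<close>.\<close>

lemma convex_on_norm_line:
  fixes w u :: "'a::real_normed_vector"
  shows "convex_on UNIV (\<lambda>s. norm (w + s *\<^sub>R u))"
proof (rule convex_onI)
  fix t a b :: real
  assume t: "0 < t" "t < 1"
  have "w + ((1 - t) *\<^sub>R a + t *\<^sub>R b) *\<^sub>R u = (1 - t) *\<^sub>R (w + a *\<^sub>R u) + t *\<^sub>R (w + b *\<^sub>R u)"
    by (simp add: algebra_simps)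
  also have "norm \<dots> \<le> norm ((1 - t) *\<^sub>R (w + a *\<^sub>R u)) + norm (t *\<^sub>R (w + b *\<^sub>R u))"
    by (rule norm_triangle_ineq)
  also have "\<dots> = (1 - t) * norm (w + a *\<^sub>R u) + t * norm (w + b *\<^sub>R u)"
    using t by simp
  finally show "norm (w + ((1 - t) *\<^sub>R a + t *\<^sub>R b) *\<^sub>R u)
      \<le> (1 - t) * norm (w + a *\<^sub>R u) + t * norm (w + b *\<^sub>R u)" .
qed simp

lemma convex_on_three_points:
  fixes f :: "real \<Rightarrow> real"
  assumes f: "convex_on I f" and I: "a \<in> I" "c \<in> I" and "a < b" "b < c"
  shows "(c - a) * f b \<le> (c - b) * f a + (b - a) * f c"
proof -
  define \<mu> where "\<mu> = (b - a) / (c - a)"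
  have \<mu>: "0 \<le> \<mu>" "\<mu> \<le> 1"
    using assms(4,5) by (auto simp: \<mu>_def field_simps)
  have "\<mu> * (c - a) = b - a"
    using assms(4,5) by (simp add: \<mu>_def)
  then have \<mu>_scaled: "\<mu> * (c - a) = b - a" "(1 - \<mu>) * (c - a) = c - b"
    by (simp_all add: left_diff_distrib)
  then have "b = (1 - \<mu>) *\<^sub>R a + \<mu> *\<^sub>R c"
    by (simp add: algebra_simps)
  then have "f b \<le> (1 - \<mu>) * f a + \<mu> * f c"
    using convex_onD[OF f \<mu> I] by simp
  then have "(c - a) * f b \<le> (c - a) * ((1 - \<mu>) * f a + \<mu> * f c)"
    using assms(4,5) by (intro mult_left_mono) auto
  also have "\<dots> = ((1 - \<mu>) * (c - a)) * f a + (\<mu> * (c - a)) * f c"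
    by (simp add: algebra_simps)
  finally show ?thesis
    unfolding \<mu>_scaled .
qed

text \<open>The two difference quotients are in fact separated by \<open>\<delta> / (t (1 - t))\<close>, and
\<open>t (1 - t) \<le> 1/4\<close>.\<close>

lemma convex_on_gap_imp_slope_increase:
  fixes f :: "real \<Rightarrow> real"
  assumes f: "convex_on UNIV f" and t: "0 < t" "t < 1" and "0 \<le> \<delta>"
    and gap: "f (a + t) + \<delta> \<le> (1 - t) * f a + t * f (a + 1)"
  shows "f a - f (a - 1) + 4 * \<delta> \<le> f (a + 2) - f (a + 1)"
proof -
  define L where "L = f a - f (a - 1)"
  define U where "U = f (a + 2) - f (a + 1)"
  have "(a + t - (a - 1)) * f a \<le> (a + t - a) * f (a - 1) + (a - (a - 1)) * f (a + t)"
    using t by (intro convex_on_three_points[OF f]) auto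
  then have left: "t * L \<le> f (a + t) - f a"
    unfolding L_def by (simp add: algebra_simps)
  have "(a + 2 - (a + t)) * f (a + 1) \<le> (a + 2 - (a + 1)) * f (a + t) + (a + 1 - (a + t)) * f (a + 2)"
    using t by (intro convex_on_three_points[OF f]) auto
  then have right: "f (a + 1) - f (a + t) \<le> (1 - t) * U"
    unfolding U_def by (simp add: algebra_simps)
  have "\<delta> \<le> t * (f (a + 1) - f (a + t)) - (1 - t) * (f (a + t) - f a)"
    using gap by (simp add: algebra_simps)
  also have "\<dots> \<le> t * ((1 - t) * U) - (1 - t) * (t * L)"
    using left right t by (intro diff_mono mult_left_mono) auto
  finally have \<delta>: "\<delta> \<le> t * (1 - t) * (U - L)"
    by (simp add: algebra_simps)
  have "t * (1 - t) \<le> 1 / 4"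
    using zero_le_power2[of "t - 1/2"] by (simp add: power2_eq_square algebra_simps)
  moreover have "0 \<le> U - L"
  proof -
    have "0 \<le> t * (1 - t) * (U - L)"
      using \<delta> \<open>0 \<le> \<delta>\<close> by linarith
    moreover have "0 < t * (1 - t)"
      using t by simp
    ultimately show ?thesis
      by (simp add: zero_le_mult_iff)
  qed
  ultimately have "t * (1 - t) * (U - L) \<le> 1 / 4 * (U - L)"
    by (rule mult_right_mono)
  with \<delta> show ?thesis
    unfolding L_def U_def by simp
qed

lemma norm_radial_step_ge:
  fixes v w :: "'a::real_normed_vector"
  assumes v: "norm v = 1" and R: "0 < R" and \<epsilon>: "0 \<le> \<epsilon>" and w: "4 * norm w \<le> R"
  shows "norm (R *\<^sub>R v + w) + \<epsilon> / 2 \<le> norm ((R + \<epsilon>) *\<^sub>R v + w)"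
proof -
  have "(R + \<epsilon>) *\<^sub>R (R *\<^sub>R v + w) = R *\<^sub>R ((R + \<epsilon>) *\<^sub>R v + w) + \<epsilon> *\<^sub>R w"
    by (simp add: algebra_simps)
  then have "(R + \<epsilon>) * norm (R *\<^sub>R v + w) = norm (R *\<^sub>R ((R + \<epsilon>) *\<^sub>R v + w) + \<epsilon> *\<^sub>R w)"
    using R \<epsilon> by (metis abs_of_nonneg add_nonneg_nonneg less_imp_le norm_scaleR)
  also have "\<dots> \<le> R * norm ((R + \<epsilon>) *\<^sub>R v + w) + \<epsilon> * norm w"
    using R \<epsilon> norm_triangle_ineq[of "R *\<^sub>R ((R + \<epsilon>) *\<^sub>R v + w)" "\<epsilon> *\<^sub>R w"] by simp
  finally have scaled: "(R + \<epsilon>) * norm (R *\<^sub>R v + w) \<le> R * norm ((R + \<epsilon>) *\<^sub>R v + w) + \<epsilon> * norm w" .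
  have "R - norm w \<le> norm (R *\<^sub>R v + w)"
    using R v norm_triangle_ineq4[of "R *\<^sub>R v + w" w] by simp
  then have "\<epsilon> * (R / 2) \<le> \<epsilon> * (norm (R *\<^sub>R v + w) - norm w)"
    using w \<epsilon> by (intro mult_left_mono) auto
  then have "R * (norm (R *\<^sub>R v + w) + \<epsilon> / 2) \<le> R * norm ((R + \<epsilon>) *\<^sub>R v + w)"
    using scaled by (simp add: algebra_simps)
  then show ?thesis
    using R by simp
qed

lemma linear_growth_of_stepwise_increase:
  fixes g :: "nat \<Rightarrow> real"
  assumes "\<And>n. n < m \<Longrightarrow> g n + \<delta> \<le> g (Suc n)"
  shows "g 0 + real m * \<delta> \<le> g m"
  using assms
proof (induction m)
  case (Suc m)
  then have "g 0 + real m * \<delta> + \<delta> \<le> g (Suc m)"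
    by (meson add_right_mono less_Suc_eq order_trans)
  then show ?case
    by (simp add: algebra_simps)
qed simp

lemma norm_line_gap_if_dist_le:
  fixes p x y v :: "'a::real_normed_vector"
  assumes dist_le: "\<And>c. norm (p - c) \<le> (1 - t) * norm (x - c) + t * norm (y - c)"
    and p: "p = (1 - t) *\<^sub>R x + t *\<^sub>R y + \<epsilon> *\<^sub>R v"
    and v: "norm v = 1" and R: "0 < R" and \<epsilon>: "0 \<le> \<epsilon>" and k: "4 * norm (k *\<^sub>R (y - x)) \<le> R"
  shows "norm (R *\<^sub>R v + k *\<^sub>R (y - x)) + \<epsilon> / 2
    \<le> (1 - t) * norm (R *\<^sub>R v + (k - t) *\<^sub>R (y - x)) + t * norm (R *\<^sub>R v + (k + 1 - t) *\<^sub>R (y - x))"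
proof -
  define c where "c = (1 - t) *\<^sub>R x + t *\<^sub>R y - (R *\<^sub>R v + k *\<^sub>R (y - x))"
  have "norm (R *\<^sub>R v + k *\<^sub>R (y - x)) + \<epsilon> / 2 \<le> norm (p - c)"
    using norm_radial_step_ge[OF v R \<epsilon> k] unfolding c_def p by (simp add: algebra_simps)
  also have "\<dots> \<le> (1 - t) * norm (x - c) + t * norm (y - c)"
    by (rule dist_le)
  also have "\<dots> = (1 - t) * norm (R *\<^sub>R v + (k - t) *\<^sub>R (y - x)) + t * norm (R *\<^sub>R v + (k + 1 - t) *\<^sub>R (y - x))"
    unfolding c_def by (simp add: algebra_simps)
  finally show ?thesis .
qed

lemma eq_convex_combination_if_dist_le:
  fixes p x y :: "'a::real_normed_vector"
  assumes t: "0 < t" "t < 1"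
    and dist_le: "\<And>c. norm (p - c) \<le> (1 - t) * norm (x - c) + t * norm (y - c)"
  shows "p = (1 - t) *\<^sub>R x + t *\<^sub>R y"
proof (rule ccontr)
  define l where "l = (1 - t) *\<^sub>R x + t *\<^sub>R y"
  define \<epsilon> where "\<epsilon> = norm (p - l)"
  define v where "v = (1 / \<epsilon>) *\<^sub>R (p - l)"
  define u where "u = y - x"
  assume "p \<noteq> (1 - t) *\<^sub>R x + t *\<^sub>R y"
  then have \<epsilon>: "0 < \<epsilon>"
    unfolding \<epsilon>_def l_def by simp
  have v: "norm v = 1" and p: "p = l + \<epsilon> *\<^sub>R v"
    using \<epsilon> unfolding v_def \<epsilon>_def by auto
  obtain m :: nat where m: "norm u < real m * \<epsilon>"
    using reals_Archimedean3[OF \<epsilon>] by blast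
  define R where "R = 8 * real m * norm u + 1"
  have R: "0 < R"
    unfolding R_def by (simp add: add_nonneg_pos)
  define f where "f s = norm (R *\<^sub>R v + s *\<^sub>R u)" for s
  have f_convex: "convex_on UNIV f"
    unfolding f_def by (rule convex_on_norm_line)
  have f_unit_increment: "\<bar>f (s + 1) - f s\<bar> \<le> norm u" for s
    using norm_triangle_ineq3[of "R *\<^sub>R v + (s + 1) *\<^sub>R u" "R *\<^sub>R v + s *\<^sub>R u"]
    unfolding f_def by (simp add: algebra_simps)
  have gap: "f k + \<epsilon> / 2 \<le> (1 - t) * f (k - t) + t * f (k + 1 - t)"
    if k: "0 \<le> k" "k \<le> 2 * real m" for k
  proof -
    have "4 * norm (k *\<^sub>R u) \<le> R"
      using k mult_right_mono[OF k(2), of "norm u"] unfolding R_def by simp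
    then show ?thesis
      using norm_line_gap_if_dist_le[OF dist_le _ v R less_imp_le[OF \<epsilon>]] p
      unfolding f_def u_def l_def by blast
  qed
  define T where "T n = f (2 * real n + 2 - t) - f (2 * real n + 1 - t)" for n
  have "T n + 2 * \<epsilon> \<le> T (Suc n)" if "n < m" for n
    using convex_on_gap_imp_slope_increase[OF f_convex t, of "\<epsilon> / 2" "2 * real n + 2 - t"] \<epsilon>
      gap[of "2 * real n + 2"] that
    unfolding T_def by (simp add: algebra_simps)
  then have "T 0 + real m * (2 * \<epsilon>) \<le> T m"
    by (rule linear_growth_of_stepwise_increase)
  moreover have T_bound: "\<bar>T n\<bar> \<le> norm u" for n
    using f_unit_increment[of "2 * real n + 1 - t"] unfolding T_def by (simp add: algebra_simps)
  ultimately show False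
    using m abs_le_D1[OF T_bound[of m]] abs_le_D2[OF T_bound[of 0]] by linarith
qed

lemma conical_bicombing_linear:
  "conical_bicombing (\<lambda>(x::'a::real_normed_vector) y t. (1 - t) *\<^sub>R x + t *\<^sub>R y)"
  unfolding conical_bicombing_def bicombing_def
proof (intro conjI allI ballI)
  fix x y :: 'a and s t :: real
  have "(1 - s) *\<^sub>R x + s *\<^sub>R y - ((1 - t) *\<^sub>R x + t *\<^sub>R y) = (s - t) *\<^sub>R (y - x)"
    by (simp add: algebra_simps)
  then show "dist ((1 - s) *\<^sub>R x + s *\<^sub>R y) ((1 - t) *\<^sub>R x + t *\<^sub>R y) = \<bar>s - t\<bar> * dist x y"
    by (simp add: dist_norm norm_minus_commute)
next
  fix x y x' y' :: 'a and t :: real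
  assume t: "t \<in> {0..1}"
  have "(1 - t) *\<^sub>R x + t *\<^sub>R y - ((1 - t) *\<^sub>R x' + t *\<^sub>R y') = (1 - t) *\<^sub>R (x - x') + t *\<^sub>R (y - y')"
    by (simp add: algebra_simps)
  also have "norm \<dots> \<le> norm ((1 - t) *\<^sub>R (x - x')) + norm (t *\<^sub>R (y - y'))"
    by (rule norm_triangle_ineq)
  also have "\<dots> = (1 - t) * norm (x - x') + t * norm (y - y')"
    using t by simp
  finally show "dist ((1 - t) *\<^sub>R x + t *\<^sub>R y) ((1 - t) *\<^sub>R x' + t *\<^sub>R y') \<le> (1 - t) * dist x x' + t * dist y y'"
    by (simp add: dist_norm)
qed simp_all

lemma bicombing_constant:
  assumes "bicombing \<sigma>" and "t \<in> {0..1}"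
  shows "\<sigma> z z t = z"
proof -
  have "dist (\<sigma> z z t) (\<sigma> z z 0) = \<bar>t - 0\<bar> * dist z z"
    using assms unfolding bicombing_def by (meson atLeastAtMost_iff order_refl zero_le_one)
  moreover have "\<sigma> z z 0 = z"
    using assms unfolding bicombing_def by blast
  ultimately show ?thesis
    by simp
qed

lemma conical_bicombing_eq_linear:
  fixes \<sigma> :: "'a::real_normed_vector \<Rightarrow> 'a \<Rightarrow> real \<Rightarrow> 'a"
  assumes \<sigma>: "conical_bicombing \<sigma>" and t: "t \<in> {0..1}"
  shows "\<sigma> x y t = (1 - t) *\<^sub>R x + t *\<^sub>R y"
proof -
  have bicomb: "bicombing \<sigma>"
    using \<sigma> unfolding conical_bicombing_def by simp
  consider "t = 0" | "t = 1" | "0 < t" "t < 1"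
    using t by fastforce
  then show ?thesis
  proof cases
    case 3
    show ?thesis
    proof (rule eq_convex_combination_if_dist_le[OF 3])
      fix c
      have "dist (\<sigma> x y t) (\<sigma> c c t) \<le> (1 - t) * dist x c + t * dist y c"
        using \<sigma> t unfolding conical_bicombing_def by blast
      then show "norm (\<sigma> x y t - c) \<le> (1 - t) * norm (x - c) + t * norm (y - c)"
        using bicombing_constant[OF bicomb t] by (simp add: dist_norm)
    qed
  qed (use bicomb in \<open>simp_all add: bicombing_def\<close>)
qed

theorem proposition3p3:
  shows "conical_bicombing (\<lambda>(x::'a::banach) y t. (1 - t) *\<^sub>R x + t *\<^sub>R y) \<and>
    (\<forall>\<sigma> :: 'a \<Rightarrow> 'a \<Rightarrow> real \<Rightarrow> 'a. conical_bicombing \<sigma> \<longrightarrow>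
       (\<forall>x y. \<forall>t\<in>{0..1}. \<sigma> x y t = (1 - t) *\<^sub>R x + t *\<^sub>R y))"
  using conical_bicombing_linear conical_bicombing_eq_linear by blast

end
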